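(* Let $n\ge1$, let $B=\{\cos(\theta)|0\rangle+\sin(\theta)|1\rangle\mid 0\le\theta<2\pi\}$ be the set of real-amplitude one-qubit pure states, and let $\mathcal S=B^{\otimes n}=\{|b_1\rangle\otimes\cdots\otimes|b_n\rangle\mid |b_j\rangle\in B\}$. Let $\sigma_0=\begin{pmatrix}1&0\\0&1\end{pmatrix}$, $\sigma_2=\begin{pmatrix}0&-i\\i&0\end{pmatrix}$, and for $x\in\{0,2\}^n$ let $\overline{\sigma_x}=\sigma_{x_1}\otimes\cdots\otimes\sigma_{x_n}$. Let $\mathcal E=\{\frac{1}{\sqrt{2^n}}\overline{\sigma_x}\mid x\in\{0,2\}^n\}$. Then $[\mathcal S,\mathcal E,\tilde I_{2^n}]$ is a private quantum channel; that is, for every $|\phi\rangle\in\mathcal S$, $$\sum_{x\in\{0,2\}^n}\frac{1}{2^n}\overline{\sigma_x}\,|\phi\rangle\langle\phi|\,\overline{\sigma_x}^\dagger=\tilde I_{2^n}.$$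
   Context: $\mathcal{H}_{2^n}$ denotes the Hilbert space of $n$ qubits; $\tilde I_{M}=\frac1M I_M$ is the totally mixed state. A superoperator $\mathcal{E}=\{\sqrt{p_i}U_i\mid 1\le i\le N\}$ (with $U_i$ unitary, $p_i\ge0$, $\sum_ip_i=1$) acts by $\mathcal{E}(\rho)=\sum_ip_iU_i\rho U_i^\dagger$. Definition (private quantum channel, PQC): let $\mathcal S\subseteq\mathcal H_{2^n}$ be a set of pure $n$-qubit states, $\mathcal E=\{\sqrt{p_i}U_i\}$ with each $U_i$ unitary on $\mathcal H_{2^m}$, $\rho_a$ an $(m-n)$-qubit density matrix, $\rho_0$ an $m$-qubit density matrix. Then $[\mathcal S,\mathcal E,\rho_a,\rho_0]$ is a PQC iff for all $|\phi\rangle\in\mathcal S$, $\sum_ip_iU_i(|\phi\rangle\langle\phi|\otimes\rho_a)U_i^\dagger=\rho_0$. When $m=n$ (no ancilla) $\rho_a$ is omitted and one writes $[\mathcal S,\mathcal E,\rho_0]$. *)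

theory Defs
  imports "HOL-Analysis.Analysis" "Jordan_Normal_Form.Matrix"
begin

definition kron_mat :: "complex mat \<Rightarrow> complex mat \<Rightarrow> complex mat" where
  "kron_mat A B = mat (dim_row A * dim_row B) (dim_col A * dim_col B)
     (\<lambda>(i,j). A $$ (i div dim_row B, j div dim_col B) * B $$ (i mod dim_row B, j mod dim_col B))"

definition kron_vec :: "complex vec \<Rightarrow> complex vec \<Rightarrow> complex vec" where
  "kron_vec u v = vec (dim_vec u * dim_vec v) (\<lambda>i. u $ (i div dim_vec v) * v $ (i mod dim_vec v))"

definition tensor_mats :: "complex mat list \<Rightarrow> complex mat" where
  "tensor_mats As = foldr kron_mat As (1\<^sub>m 1)"

definition tensor_vecs :: "complex vec list \<Rightarrow> complex vec" where
  "tensor_vecs vs = foldr kron_vec vs (vec 1 (\<lambda>_. 1))"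

definition dagger :: "complex mat \<Rightarrow> complex mat" where
  "dagger A = mat (dim_col A) (dim_row A) (\<lambda>(i,j). cnj (A $$ (j,i)))"

definition ket_bra :: "complex vec \<Rightarrow> complex mat" where
  "ket_bra v = mat (dim_vec v) (dim_vec v) (\<lambda>(i,j). v $ i * cnj (v $ j))"

definition unitary_mat :: "nat \<Rightarrow> complex mat \<Rightarrow> bool" where
  "unitary_mat d U \<longleftrightarrow> U \<in> carrier_mat d d \<and> U * dagger U = 1\<^sub>m d"

(* A superoperator {sqrt p_i U_i} is represented by the list of pairs (p_i, U_i);
   it acts on d x d density matrices by rho \<mapsto> \<Sum>_i p_i U_i rho U_i^dagger *)
definition superop_apply :: "nat \<Rightarrow> (real \<times> complex mat) list \<Rightarrow> complex mat \<Rightarrow> complex mat" where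
  "superop_apply d E \<rho> = foldr (\<lambda>(p,U) acc. complex_of_real p \<cdot>\<^sub>m (U * \<rho> * dagger U) + acc) E (0\<^sub>m d d)"

definition is_superop :: "nat \<Rightarrow> (real \<times> complex mat) list \<Rightarrow> bool" where
  "is_superop d E \<longleftrightarrow> (\<forall>(p,U)\<in>set E. p \<ge> 0 \<and> unitary_mat d U) \<and> sum_list (map fst E) = 1"

definition is_PQC :: "nat \<Rightarrow> complex vec set \<Rightarrow> (real \<times> complex mat) list \<Rightarrow> complex mat \<Rightarrow> bool" where
  "is_PQC n S E \<rho>0 \<longleftrightarrow> is_superop (2^n) E \<and> \<rho>0 \<in> carrier_mat (2^n) (2^n) \<and>
     (\<forall>\<phi>\<in>S. dim_vec \<phi> = 2^n \<and> superop_apply (2^n) E (ket_bra \<phi>) = \<rho>0)"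

definition mixed_state :: "nat \<Rightarrow> complex mat" where
  "mixed_state M = (1 / of_nat M) \<cdot>\<^sub>m 1\<^sub>m M"

definition real_qubit :: "real \<Rightarrow> complex vec" where
  "real_qubit \<theta> = vec_of_list [complex_of_real (cos \<theta>), complex_of_real (sin \<theta>)]"

definition B_states :: "complex vec set" where
  "B_states = {real_qubit \<theta> | \<theta>. 0 \<le> \<theta> \<and> \<theta> < 2 * pi}"

definition tensor_power_states :: "nat \<Rightarrow> complex vec set \<Rightarrow> complex vec set" where
  "tensor_power_states n B = {tensor_vecs bs | bs. length bs = n \<and> set bs \<subseteq> B}"

definition sigma0 :: "complex mat" where
  "sigma0 = mat_of_rows_list 2 [[1, 0], [0, 1]]"

definition sigma2 :: "complex mat" where
  "sigma2 = mat_of_rows_list 2 [[0, - \<i>], [\<i>, 0]]"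

definition pauli :: "nat \<Rightarrow> complex mat" where
  "pauli k = (if k = 0 then sigma0 else sigma2)"

definition sigma_bar :: "nat list \<Rightarrow> complex mat" where
  "sigma_bar x = tensor_mats (map pauli x)"

end

theory Submission
  imports Defs
begin

(* For a real unit vector b, conjugation by sigma2 sends |b><b| to I - |b><b|, so the one-qubit
   channel {sigma0, sigma2} with weights 1/2 maps every state of B to I/2.  The n-qubit channel
   is the n-fold tensor product of this one-qubit channel, and a tensor product of channels acts
   factorwise on product states; hence it maps |b_1> ... |b_n> to (I/2)^(tensor n) = I/2^n. *)

lemma kron_mat_dims [simp]:
  "dim_row (kron_mat A B) = dim_row A * dim_row B"
  "dim_col (kron_mat A B) = dim_col A * dim_col B"
  by (simp_all add: kron_mat_def)

lemma index_kron_mat [simp]: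
  "i < dim_row A * dim_row B \<Longrightarrow> j < dim_col A * dim_col B \<Longrightarrow>
   kron_mat A B $$ (i, j) =
     A $$ (i div dim_row B, j div dim_col B) * B $$ (i mod dim_row B, j mod dim_col B)"
  by (simp add: kron_mat_def)

lemma div_mod_less_mult:
  fixes i :: nat
  assumes "i < a * b"
  shows "i div b < a" "i mod b < b"
  using assms
  by (auto simp: less_mult_imp_div_less) (metis mod_less_divisor mult_0_right not_less0 gr0I)

lemma sum_lessThan_mult:
  fixes g :: "nat \<Rightarrow> 'a::comm_monoid_add"
  shows "(\<Sum>k<a * b. g k) = (\<Sum>p<a. \<Sum>q<b. g (p * b + q))"
proof -
  have "(\<Sum>k<a * b. g k) = (\<Sum>p<a. sum g {p * b..<p * b + b})"
    by (rule sum.nat_group[symmetric])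
  also have "\<dots> = (\<Sum>p<a. \<Sum>q<b. g (p * b + q))"
    by (simp add: sum.shift_bounds_nat_ivl[of g 0 _ b, simplified] atLeast0LessThan add.commute)
  finally show ?thesis .
qed

lemma kron_mat_mult:
  assumes A: "A \<in> carrier_mat ra ca" and B: "B \<in> carrier_mat rb cb"
    and C: "C \<in> carrier_mat ca cc" and D: "D \<in> carrier_mat cb cd"
  shows "kron_mat A B * kron_mat C D = kron_mat (A * C) (B * D)"
proof (rule eq_matI)
  fix i j assume "i < dim_row (kron_mat (A * C) (B * D))" "j < dim_col (kron_mat (A * C) (B * D))"
  then have i: "i < ra * rb" and j: "j < cc * cd" using A B C D by auto
  note ij = div_mod_less_mult[OF i] div_mod_less_mult[OF j]
  have "(kron_mat A B * kron_mat C D) $$ (i, j) =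
      (\<Sum>k<ca * cb. kron_mat A B $$ (i, k) * kron_mat C D $$ (k, j))"
    using i j A B C D by (simp add: scalar_prod_def lessThan_atLeast0)
  also have "\<dots> = (\<Sum>p<ca. \<Sum>q<cb.
      kron_mat A B $$ (i, p * cb + q) * kron_mat C D $$ (p * cb + q, j))"
    by (rule sum_lessThan_mult)
  also have "\<dots> = (\<Sum>p<ca. \<Sum>q<cb. (A $$ (i div rb, p) * C $$ (p, j div cd)) *
        (B $$ (i mod rb, q) * D $$ (q, j mod cd)))"
  proof (intro sum.cong refl)
    fix p q assume p: "p \<in> {..<ca}" and q: "q \<in> {..<cb}"
    have "p * cb + q < (p + 1) * cb" using q by simp
    also have "\<dots> \<le> ca * cb" using p by (intro mult_le_mono1) simp
    finally show "kron_mat A B $$ (i, p * cb + q) * kron_mat C D $$ (p * cb + q, j) =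
        (A $$ (i div rb, p) * C $$ (p, j div cd)) * (B $$ (i mod rb, q) * D $$ (q, j mod cd))"
      using A B C D i j q by simp
  qed
  also have "\<dots> = (A * C) $$ (i div rb, j div cd) * (B * D) $$ (i mod rb, j mod cd)"
    using A B C D ij by (simp add: sum_product scalar_prod_def lessThan_atLeast0)
  finally show "(kron_mat A B * kron_mat C D) $$ (i, j) = kron_mat (A * C) (B * D) $$ (i, j)"
    using A B C D i j by simp
qed (use A B C D in auto)

lemma kron_one_mat: "kron_mat (1\<^sub>m a) (1\<^sub>m b) = 1\<^sub>m (a * b)"
proof (rule eq_matI)
  fix i j assume "i < dim_row (1\<^sub>m (a * b) :: complex mat)" "j < dim_col (1\<^sub>m (a * b) :: complex mat)"
  then have i: "i < a * b" and j: "j < a * b" by auto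
  have "i div b = j div b \<and> i mod b = j mod b \<longleftrightarrow> i = j"
    by (metis div_mult_mod_eq)
  then show "kron_mat (1\<^sub>m a) (1\<^sub>m b) $$ (i, j) = 1\<^sub>m (a * b) $$ (i, j)"
    using i j div_mod_less_mult[OF i] div_mod_less_mult[OF j] by auto
qed auto

lemma dagger_dims [simp]: "dim_row (dagger A) = dim_col A" "dim_col (dagger A) = dim_row A"
  by (simp_all add: dagger_def)

lemma index_dagger [simp]:
  "i < dim_col A \<Longrightarrow> j < dim_row A \<Longrightarrow> dagger A $$ (i, j) = cnj (A $$ (j, i))"
  by (simp add: dagger_def)

lemma dagger_one_mat [simp]: "dagger (1\<^sub>m d) = 1\<^sub>m d"
  by (rule eq_matI) auto

lemma dagger_kron_mat: "dagger (kron_mat A B) = kron_mat (dagger A) (dagger B)"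
proof (rule eq_matI)
  fix i j
  assume "i < dim_row (kron_mat (dagger A) (dagger B))" "j < dim_col (kron_mat (dagger A) (dagger B))"
  then have i: "i < dim_col A * dim_col B" and j: "j < dim_row A * dim_row B" by auto
  show "dagger (kron_mat A B) $$ (i, j) = kron_mat (dagger A) (dagger B) $$ (i, j)"
    using i j div_mod_less_mult[OF i] div_mod_less_mult[OF j] by simp
qed auto

lemma kron_mat_conjugate:
  assumes "U \<in> carrier_mat a a" "V \<in> carrier_mat b b" "\<rho> \<in> carrier_mat a a" "\<sigma> \<in> carrier_mat b b"
  shows "kron_mat U V * kron_mat \<rho> \<sigma> * dagger (kron_mat U V) =
    kron_mat (U * \<rho> * dagger U) (V * \<sigma> * dagger V)"
proof -
  have "kron_mat U V * kron_mat \<rho> \<sigma> = kron_mat (U * \<rho>) (V * \<sigma>)"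
    using assms by (rule kron_mat_mult)
  also have "\<dots> * dagger (kron_mat U V) = kron_mat (U * \<rho> * dagger U) (V * \<sigma> * dagger V)"
    unfolding dagger_kron_mat using assms by (intro kron_mat_mult) auto
  finally show ?thesis .
qed

lemma unitary_one_mat: "unitary_mat d (1\<^sub>m d)"
  by (simp add: unitary_mat_def)

lemma kron_mat_unitary:
  assumes "unitary_mat a U" "unitary_mat b V"
  shows "unitary_mat (a * b) (kron_mat U V)"
proof -
  have "kron_mat U V * dagger (kron_mat U V) = kron_mat (U * dagger U) (V * dagger V)"
    unfolding dagger_kron_mat using assms by (intro kron_mat_mult) (auto simp: unitary_mat_def)
  then show ?thesis
    using assms by (auto simp: unitary_mat_def kron_one_mat)
qed

lemma ket_bra_carrier: "ket_bra v \<in> carrier_mat (dim_vec v) (dim_vec v)"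
  by (simp add: ket_bra_def)

lemma ket_bra_kron_vec: "ket_bra (kron_vec u v) = kron_mat (ket_bra u) (ket_bra v)"
proof (rule eq_matI)
  fix i j
  assume "i < dim_row (kron_mat (ket_bra u) (ket_bra v))" "j < dim_col (kron_mat (ket_bra u) (ket_bra v))"
  then have i: "i < dim_vec u * dim_vec v" and j: "j < dim_vec u * dim_vec v"
    by (simp_all add: ket_bra_def)
  show "ket_bra (kron_vec u v) $$ (i, j) = kron_mat (ket_bra u) (ket_bra v) $$ (i, j)"
    using i j div_mod_less_mult[OF i] div_mod_less_mult[OF j]
    by (simp add: ket_bra_def kron_vec_def)
qed (simp_all add: ket_bra_def kron_vec_def)

lemma dim_tensor_vecs: "set vs \<subseteq> carrier_vec d \<Longrightarrow> dim_vec (tensor_vecs vs) = d ^ length vs"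
  by (induction vs) (auto simp: tensor_vecs_def kron_vec_def)

lemma mixed_state_carrier: "mixed_state d \<in> carrier_mat d d"
  by (simp add: mixed_state_def)

lemma kron_mixed_state: "kron_mat (mixed_state a) (mixed_state b) = mixed_state (a * b)"
proof (rule eq_matI)
  fix i j assume "i < dim_row (mixed_state (a * b))" "j < dim_col (mixed_state (a * b))"
  then have i: "i < a * b" and j: "j < a * b" by (simp_all add: mixed_state_def)
  have "i div b = j div b \<and> i mod b = j mod b \<longleftrightarrow> i = j"
    by (metis div_mult_mod_eq)
  then show "kron_mat (mixed_state a) (mixed_state b) $$ (i, j) = mixed_state (a * b) $$ (i, j)"
    using i j div_mod_less_mult[OF i] div_mod_less_mult[OF j] by (auto simp: mixed_state_def)
qed (simp_all add: mixed_state_def)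

lemma superop_apply_dims [simp]:
  "dim_row (superop_apply d E \<rho>) = d" "dim_col (superop_apply d E \<rho>) = d"
  by (induction E) (auto simp: superop_apply_def)

lemma superop_apply_simps [simp]:
  "superop_apply d [] \<rho> = 0\<^sub>m d d"
  "superop_apply d ((p, U) # E) \<rho> =
    complex_of_real p \<cdot>\<^sub>m (U * \<rho> * dagger U) + superop_apply d E \<rho>"
  by (simp_all add: superop_apply_def)

lemma sum_list_concat: "sum_list (concat xss) = sum_list (map sum_list xss)"
  by (induction xss) auto

lemma index_superop_apply:
  assumes "snd ` set E \<subseteq> carrier_mat d d" "i < d" "j < d"
  shows "superop_apply d E \<rho> $$ (i, j) =
    (\<Sum>(p, U)\<leftarrow>E. complex_of_real p * (U * \<rho> * dagger U) $$ (i, j))"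
  using assms(1)
proof (induction E)
  case (Cons pU E)
  then show ?case
    using assms(2,3) by (cases pU) auto
qed (simp add: assms)

lemma is_superop_carrier: "is_superop d E \<Longrightarrow> snd ` set E \<subseteq> carrier_mat d d"
  by (auto simp: is_superop_def unitary_mat_def)

(* F is the outer loop, matching List.n_lists, which varies the head of a list fastest. *)
definition tensor_superop ::
    "(real \<times> complex mat) list \<Rightarrow> (real \<times> complex mat) list \<Rightarrow> (real \<times> complex mat) list" where
  "tensor_superop E F = concat (map (\<lambda>(q, V). map (\<lambda>(p, U). (p * q, kron_mat U V)) E) F)"

lemma is_superop_tensor:
  assumes "is_superop a E" "is_superop b F"
  shows "is_superop (a * b) (tensor_superop E F)"
proof -
  have "(\<Sum>(q, V)\<leftarrow>F. \<Sum>(p, U)\<leftarrow>E. p * q) = (\<Sum>(p, U)\<leftarrow>E. p) * (\<Sum>(q, V)\<leftarrow>F. q)"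
    by (simp add: sum_list_const_mult sum_list_mult_const case_prod_beta')
  then show ?thesis
    using assms
    by (auto simp: is_superop_def tensor_superop_def kron_mat_unitary map_concat sum_list_concat
        comp_def case_prod_beta')
qed

lemma superop_apply_tensor:
  assumes E: "snd ` set E \<subseteq> carrier_mat a a" and F: "snd ` set F \<subseteq> carrier_mat b b"
    and \<rho>: "\<rho> \<in> carrier_mat a a" and \<sigma>: "\<sigma> \<in> carrier_mat b b"
  shows "superop_apply (a * b) (tensor_superop E F) (kron_mat \<rho> \<sigma>) =
    kron_mat (superop_apply a E \<rho>) (superop_apply b F \<sigma>)"
proof (rule eq_matI)
  fix i j assume "i < dim_row (kron_mat (superop_apply a E \<rho>) (superop_apply b F \<sigma>))"
    "j < dim_col (kron_mat (superop_apply a E \<rho>) (superop_apply b F \<sigma>))"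
  then have i: "i < a * b" and j: "j < a * b"
    by auto
  note ij = div_mod_less_mult[OF i] div_mod_less_mult[OF j]
  have EF: "snd ` set (tensor_superop E F) \<subseteq> carrier_mat (a * b) (a * b)"
    using E F by (fastforce simp: tensor_superop_def)
  have E': "snd x \<in> carrier_mat a a" if "x \<in> set E" for x
    using E that by auto
  have F': "snd y \<in> carrier_mat b b" if "y \<in> set F" for y
    using F that by auto
  have factor: "(kron_mat U V * kron_mat \<rho> \<sigma> * dagger (kron_mat U V)) $$ (i, j) =
      (U * \<rho> * dagger U) $$ (i div b, j div b) * (V * \<sigma> * dagger V) $$ (i mod b, j mod b)"
    if "U \<in> carrier_mat a a" "V \<in> carrier_mat b b" for U V
    using that \<rho> \<sigma> i j by (simp add: kron_mat_conjugate)
  have "superop_apply (a * b) (tensor_superop E F) (kron_mat \<rho> \<sigma>) $$ (i, j) =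
      (\<Sum>(q, V)\<leftarrow>F. \<Sum>(p, U)\<leftarrow>E. complex_of_real p * complex_of_real q *
         (kron_mat U V * kron_mat \<rho> \<sigma> * dagger (kron_mat U V)) $$ (i, j))"
    using EF i j
    by (simp add: index_superop_apply tensor_superop_def map_concat sum_list_concat comp_def
        case_prod_beta')
  also have "\<dots> = (\<Sum>(q, V)\<leftarrow>F. \<Sum>(p, U)\<leftarrow>E.
      (complex_of_real p * (U * \<rho> * dagger U) $$ (i div b, j div b)) *
      (complex_of_real q * (V * \<sigma> * dagger V) $$ (i mod b, j mod b)))"
    using factor E' F' by (simp add: case_prod_beta' ac_simps cong: map_cong)
  also have "\<dots> =
      superop_apply a E \<rho> $$ (i div b, j div b) * superop_apply b F \<sigma> $$ (i mod b, j mod b)"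
    using E F ij
    by (simp add: index_superop_apply sum_list_const_mult sum_list_mult_const case_prod_beta')
  also have "\<dots> = kron_mat (superop_apply a E \<rho>) (superop_apply b F \<sigma>) $$ (i, j)"
    using i j by simp
  finally show "superop_apply (a * b) (tensor_superop E F) (kron_mat \<rho> \<sigma>) $$ (i, j) =
      kron_mat (superop_apply a E \<rho>) (superop_apply b F \<sigma>) $$ (i, j)" .
qed auto

lemma sigma0_eq_one: "sigma0 = 1\<^sub>m 2"
  by (rule eq_matI) (auto simp: sigma0_def mat_of_rows_list_def less_2_cases_iff)

lemma sigma2_carrier: "sigma2 \<in> carrier_mat 2 2"
  by (rule carrier_matI) (simp_all add: sigma2_def mat_of_rows_list_def)

lemma unitary_sigma0: "unitary_mat 2 sigma0"
  by (simp add: sigma0_eq_one unitary_one_mat)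

lemma unitary_sigma2: "unitary_mat 2 sigma2"
  unfolding unitary_mat_def
  by (rule conjI[OF sigma2_carrier], rule eq_matI)
    (auto simp: sigma2_def mat_of_rows_list_def scalar_prod_def less_Suc_eq eval_nat_numeral)

lemma is_superop_sigma02: "is_superop 2 [(1 / 2, sigma0), (1 / 2, sigma2)]"
  by (simp add: is_superop_def unitary_sigma0 unitary_sigma2)

lemma dim_real_qubit [simp]: "dim_vec (real_qubit t) = 2"
  by (simp add: real_qubit_def)

lemma B_states_carrier: "B_states \<subseteq> carrier_vec 2"
  by (auto simp: B_states_def intro!: carrier_vecI)

lemma sigma2_conj_real_qubit:
  "sigma2 * ket_bra (real_qubit t) * dagger sigma2 = 1\<^sub>m 2 - ket_bra (real_qubit t)"
proof -
  have "(complex_of_real (cos t))\<^sup>2 + (complex_of_real (sin t))\<^sup>2 = 1"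
    by (simp flip: of_real_power of_real_add)
  then show ?thesis
    by (intro eq_matI)
      (auto simp: sigma2_def mat_of_rows_list_def ket_bra_def real_qubit_def scalar_prod_def
        less_Suc_eq eval_nat_numeral power2_eq_square algebra_simps)
qed

lemma sigma02_twirl_real_qubit:
  "superop_apply 2 [(1 / 2, sigma0), (1 / 2, sigma2)] (ket_bra (real_qubit t)) = mixed_state 2"
proof -
  let ?\<rho> = "ket_bra (real_qubit t)"
  have \<rho>: "?\<rho> \<in> carrier_mat 2 2"
    using ket_bra_carrier[of "real_qubit t"] by simp
  then have "sigma0 * ?\<rho> * dagger sigma0 = ?\<rho>"
    by (simp add: sigma0_eq_one left_mult_one_mat)
  then have "superop_apply 2 [(1 / 2, sigma0), (1 / 2, sigma2)] ?\<rho> =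
      (1 / 2) \<cdot>\<^sub>m ?\<rho> + ((1 / 2) \<cdot>\<^sub>m (1\<^sub>m 2 - ?\<rho>) + 0\<^sub>m 2 2)"
    by (simp add: sigma2_conj_real_qubit)
  also have "\<dots> = mixed_state 2"
    using \<rho> by (intro eq_matI) (auto simp: mixed_state_def field_simps)
  finally show ?thesis .
qed

definition sigma_channel :: "nat \<Rightarrow> (real \<times> complex mat) list" where
  "sigma_channel n = map (\<lambda>x. (1 / 2 ^ n, sigma_bar x)) (List.n_lists n [0, 2])"

lemma sigma_channel_0: "sigma_channel 0 = [(1, 1\<^sub>m 1)]"
  by (simp add: sigma_channel_def sigma_bar_def tensor_mats_def)

lemma sigma_channel_Suc:
  "sigma_channel (Suc n) = tensor_superop [(1 / 2, sigma0), (1 / 2, sigma2)] (sigma_channel n)"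
  by (simp add: sigma_channel_def tensor_superop_def sigma_bar_def tensor_mats_def pauli_def
      map_concat comp_def mult.commute)

lemma is_superop_sigma_channel: "is_superop (2 ^ n) (sigma_channel n)"
proof (induction n)
  case 0
  then show ?case
    by (simp add: sigma_channel_0 is_superop_def unitary_one_mat)
next
  case (Suc n)
  from is_superop_tensor[OF is_superop_sigma02 Suc.IH] show ?case
    by (simp add: sigma_channel_Suc)
qed

lemma sigma_channel_product_state:
  assumes "set bs \<subseteq> B_states"
  shows "superop_apply (2 ^ length bs) (sigma_channel (length bs)) (ket_bra (tensor_vecs bs)) =
    mixed_state (2 ^ length bs)"
  using assms
proof (induction bs)
  case Nil
  have "ket_bra (tensor_vecs []) = 1\<^sub>m 1"
    by (rule eq_matI) (auto simp: tensor_vecs_def ket_bra_def)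
  then show ?case
    by (simp add: sigma_channel_0 mixed_state_def)
next
  case (Cons b bs)
  let ?m = "length bs"
  obtain t where b: "b = real_qubit t"
    using Cons.prems by (auto simp: B_states_def)
  have "set bs \<subseteq> carrier_vec 2"
    using Cons.prems B_states_carrier by auto
  then have bs: "ket_bra (tensor_vecs bs) \<in> carrier_mat (2 ^ ?m) (2 ^ ?m)"
    using ket_bra_carrier[of "tensor_vecs bs"] by (simp add: dim_tensor_vecs)
  have "ket_bra (tensor_vecs (b # bs)) = kron_mat (ket_bra b) (ket_bra (tensor_vecs bs))"
    by (simp add: tensor_vecs_def ket_bra_kron_vec)
  then have "superop_apply (2 * 2 ^ ?m) (sigma_channel (Suc ?m)) (ket_bra (tensor_vecs (b # bs))) =
      kron_mat (superop_apply 2 [(1 / 2, sigma0), (1 / 2, sigma2)] (ket_bra b))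
        (superop_apply (2 ^ ?m) (sigma_channel ?m) (ket_bra (tensor_vecs bs)))"
    unfolding sigma_channel_Suc
    using is_superop_carrier[OF is_superop_sigma02] is_superop_carrier[OF is_superop_sigma_channel]
      ket_bra_carrier[of b] bs
    by (simp add: b superop_apply_tensor)
  also have "\<dots> = kron_mat (mixed_state 2) (mixed_state (2 ^ ?m))"
    using Cons by (simp only: b sigma02_twirl_real_qubit set_simps insert_subset)
  also have "\<dots> = mixed_state (2 ^ length (b # bs))"
    by (simp add: kron_mixed_state)
  finally show ?case
    by simp
qed

theorem theorem3:
  fixes n :: nat
  assumes "n \<ge> 1"
  shows "is_PQC n (tensor_power_states n B_states)
           (map (\<lambda>x. (1 / 2 ^ n, sigma_bar x)) (List.n_lists n [0, 2]))
           (mixed_state (2 ^ n))"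
  unfolding is_PQC_def sigma_channel_def[symmetric]
proof (intro conjI ballI is_superop_sigma_channel mixed_state_carrier)
  fix \<phi> assume "\<phi> \<in> tensor_power_states n B_states"
  then obtain bs where \<phi>: "\<phi> = tensor_vecs bs" and bs: "length bs = n" "set bs \<subseteq> B_states"
    by (auto simp: tensor_power_states_def)
  have "set bs \<subseteq> carrier_vec 2"
    using bs(2) B_states_carrier by blast
  then show "dim_vec \<phi> = 2 ^ n"
    using \<phi> bs(1) by (simp add: dim_tensor_vecs)
  show "superop_apply (2 ^ n) (sigma_channel n) (ket_bra \<phi>) = mixed_state (2 ^ n)"
    using sigma_channel_product_state[OF bs(2)] \<phi> bs(1) by simp
qed

end
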